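(* Let $K$ be a finite group with trivial centre. Suppose there exist subgroups $X$, $Y$ of $\mathrm{Aut}(K)$ such that $X\cap Y = 1$ and $XY = X\,\mathrm{Inn}(K) = Y\,\mathrm{Inn}(K)$. Then there exists a skew left brace with additive group isomorphic to $K$ whose multiplicative group is isomorphic to a subdirect product of $X$ and $Y$.
   Context: A skew left brace is a set $B$ with two group structures $(B,+)$ (not necessarily abelian) and $(B,\cdot)$ such that $a(b+c) = ab - a + ac$ for all $a,b,c\in B$; its additive group is $(B,+)$ and its multiplicative group is $(B,\cdot)$. $\mathrm{Inn}(K)$ is the group of inner automorphisms of $K$. A subdirect product of groups $X$ and $Y$ is a subgroup $W\le X\times Y$ whose projections onto $X$ and onto $Y$ are both surjective. *)

theory Defs
  imports "HOL-Algebra.Algebra"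
begin

definition group_center :: "('a, 'b) monoid_scheme \<Rightarrow> 'a set" where
  "group_center K = {z \<in> carrier K. \<forall>x \<in> carrier K. z \<otimes>\<^bsub>K\<^esub> x = x \<otimes>\<^bsub>K\<^esub> z}"

text \<open>Inner automorphism induced by g (extensional, as elements of AutoGroup K).\<close>
definition inner_aut :: "('a, 'b) monoid_scheme \<Rightarrow> 'a \<Rightarrow> ('a \<Rightarrow> 'a)" where
  "inner_aut K g = (\<lambda>x \<in> carrier K. g \<otimes>\<^bsub>K\<^esub> x \<otimes>\<^bsub>K\<^esub> inv\<^bsub>K\<^esub> g)"

definition Inn :: "('a, 'b) monoid_scheme \<Rightarrow> ('a \<Rightarrow> 'a) set" where
  "Inn K = inner_aut K ` carrier K"

text \<open>A skew left brace: additive group A and multiplicative group M on the same carrier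
  with a(b+c) = ab - a + ac.\<close>
definition skew_left_brace :: "'a monoid \<Rightarrow> 'a monoid \<Rightarrow> bool" where
  "skew_left_brace A M \<longleftrightarrow> group A \<and> group M \<and> carrier A = carrier M \<and>
    (\<forall>a \<in> carrier A. \<forall>b \<in> carrier A. \<forall>c \<in> carrier A.
       a \<otimes>\<^bsub>M\<^esub> (b \<otimes>\<^bsub>A\<^esub> c) =
       (a \<otimes>\<^bsub>M\<^esub> b) \<otimes>\<^bsub>A\<^esub> inv\<^bsub>A\<^esub> a \<otimes>\<^bsub>A\<^esub> (a \<otimes>\<^bsub>M\<^esub> c))"

definition subdirect_product :: "('a, 'c) monoid_scheme \<Rightarrow> ('b, 'd) monoid_scheme \<Rightarrow> ('a \<times> 'b) set \<Rightarrow> bool" where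
  "subdirect_product G1 G2 S \<longleftrightarrow> subgroup S (DirProd G1 G2) \<and> fst ` S = carrier G1 \<and> snd ` S = carrier G2"

end

theory Submission
  imports Defs
begin

text \<open>
  Write \<open>c\<^sub>k\<close> for conjugation by \<open>k\<close>; as \<open>K\<close> is centreless, \<open>c\<close> maps \<open>K\<close>
  isomorphically onto the normal subgroup \<open>Inn(K)\<close> of \<open>Aut(K)\<close>. The pairs
  \<open>(x, y) \<in> X \<times> Y\<close> with \<open>x y\<^sup>-\<^sup>1 \<in> Inn(K)\<close> form a subgroup \<open>W\<close> of \<open>X \<times> Y\<close>, and
  \<open>XY = X Inn(K) = Y Inn(K)\<close> makes both projections onto. The map \<open>(x, y) \<mapsto> c\<^sup>-\<^sup>1(x y\<^sup>-\<^sup>1)\<close>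
  is a bijection \<open>W \<rightarrow> K\<close>: injective because \<open>X \<inter> Y = 1\<close>, onto because \<open>Inn(K) \<subseteq> XY\<close>.
  Transport the group structure of \<open>W\<close> to \<open>K\<close>. If \<open>(x, y)\<close> corresponds to \<open>a\<close> and
  \<open>(x', y')\<close> to \<open>b\<close>, then \<open>x x' (y y')\<^sup>-\<^sup>1 = c\<^sub>a \<cdot> y c\<^sub>b y\<^sup>-\<^sup>1 = c\<^bsub>a \<cdot> y(b)\<^esub>\<close>, so the new
  product is \<open>a \<circ> b = a \<cdot> y(b)\<close> with \<open>y\<close> an automorphism of \<open>K\<close>, which is exactly
  what makes \<open>(K, \<cdot>, \<circ>)\<close> a skew left brace.
\<close>

definition congruent_pairs :: "('a, 'b) monoid_scheme \<Rightarrow> 'a set \<Rightarrow> 'a set \<Rightarrow> 'a set \<Rightarrow> ('a \<times> 'a) set"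
  where "congruent_pairs G N H J = {(x, y) \<in> H \<times> J. x \<otimes>\<^bsub>G\<^esub> inv\<^bsub>G\<^esub> y \<in> N}"

context group begin

lemma inv_mult_cancel_left [simp]: "x \<in> carrier G \<Longrightarrow> y \<in> carrier G \<Longrightarrow> inv x \<otimes> (x \<otimes> y) = y"
  by (simp add: m_assoc [symmetric])

lemma mult_inv_mult_conj:
  assumes "x \<in> carrier G" "y \<in> carrier G" "x' \<in> carrier G" "y' \<in> carrier G"
  shows "x \<otimes> x' \<otimes> inv (y \<otimes> y') = x \<otimes> inv y \<otimes> (y \<otimes> (x' \<otimes> inv y') \<otimes> inv y)"
  using assms by (simp add: inv_mult_group m_assoc)

lemma subset_set_mult_left:
  assumes J: "subgroup J G" and H: "H \<subseteq> carrier G"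
  shows "H \<subseteq> H <#> J"
proof
  fix h assume h: "h \<in> H"
  then have "h = h \<otimes> \<one>" using H by auto
  then show "h \<in> H <#> J" using h subgroup.one_closed [OF J] unfolding set_mult_def by blast
qed

lemma subset_set_mult_right:
  assumes H: "subgroup H G" and J: "J \<subseteq> carrier G"
  shows "J \<subseteq> H <#> J"
proof
  fix h assume h: "h \<in> J"
  then have "h = \<one> \<otimes> h" using J by auto
  then show "h \<in> H <#> J" using h subgroup.one_closed [OF H] unfolding set_mult_def by blast
qed

lemma iso_truncate: "G \<cong> monoid.truncate G"
proof -
  have "(\<lambda>x. x) \<in> iso G (monoid.truncate G)"
    by (simp add: iso_def hom_def monoid.defs bij_betw_id [unfolded id_def])
  then show ?thesis unfolding is_iso_def by blast
qed

lemma group_truncate: "group (monoid.truncate G)"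
proof (rule iso_imp_group [OF iso_truncate])
  show "monoid (monoid.truncate G)"
    using m_assoc by (unfold_locales) (simp_all add: monoid.defs)
qed

lemma subgroup_congruent_pairs:
  assumes N: "N \<lhd> G" and H: "subgroup H G" and J: "subgroup J G"
  shows "subgroup (congruent_pairs G N H J) (G\<lparr>carrier := H\<rparr> \<times>\<times> G\<lparr>carrier := J\<rparr>)"
proof -
  interpret N: normal N G by (rule N)
  have HG: "x \<in> H \<Longrightarrow> x \<in> carrier G" and JG: "y \<in> J \<Longrightarrow> y \<in> carrier G" for x y
    by (simp_all add: subgroup.mem_carrier [OF H] subgroup.mem_carrier [OF J])
  have gH: "group (G\<lparr>carrier := H\<rparr>)" and gJ: "group (G\<lparr>carrier := J\<rparr>)"
    using H J by (blast intro: subgroup_imp_group)+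
  interpret D: group "G\<lparr>carrier := H\<rparr> \<times>\<times> G\<lparr>carrier := J\<rparr>"
    using gH gJ by (rule DirProd_group)
  show ?thesis
  proof (rule D.subgroupI)
    show "congruent_pairs G N H J \<subseteq> carrier (G\<lparr>carrier := H\<rparr> \<times>\<times> G\<lparr>carrier := J\<rparr>)"
      by (auto simp: congruent_pairs_def)
    have "(\<one>, \<one>) \<in> congruent_pairs G N H J"
      using H J N.one_closed by (simp add: congruent_pairs_def subgroup.one_closed)
    then show "congruent_pairs G N H J \<noteq> {}" by blast
  next
    fix w assume "w \<in> congruent_pairs G N H J"
    then obtain x y where w: "w = (x, y)" and x: "x \<in> H" and y: "y \<in> J" and n: "x \<otimes> inv y \<in> N"
      by (auto simp: congruent_pairs_def)
    have "inv x \<otimes> inv (inv y) = inv y \<otimes> inv (x \<otimes> inv y) \<otimes> y"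
      using HG [OF x] JG [OF y] by (simp add: inv_mult_group m_assoc)
    also have "\<dots> \<in> N"
      using n JG [OF y] by (simp add: N.inv_op_closed1 N.m_inv_closed)
    finally have "(inv x, inv y) \<in> congruent_pairs G N H J"
      using x y H J by (simp add: congruent_pairs_def subgroup.m_inv_closed)
    moreover have "inv\<^bsub>G\<lparr>carrier := H\<rparr> \<times>\<times> G\<lparr>carrier := J\<rparr>\<^esub> w = (inv x, inv y)"
      using w x y H J gH gJ by (simp add: m_inv_consistent)
    ultimately show "inv\<^bsub>G\<lparr>carrier := H\<rparr> \<times>\<times> G\<lparr>carrier := J\<rparr>\<^esub> w \<in> congruent_pairs G N H J"
      by simp
  next
    fix w v assume "w \<in> congruent_pairs G N H J" "v \<in> congruent_pairs G N H J"
    then obtain x y x' y' where w: "w = (x, y)" and v: "v = (x', y')"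
      and xy: "x \<in> H" "y \<in> J" "x' \<in> H" "y' \<in> J" and n: "x \<otimes> inv y \<in> N" "x' \<otimes> inv y' \<in> N"
      by (auto simp: congruent_pairs_def)
    have "x \<otimes> x' \<otimes> inv (y \<otimes> y') = x \<otimes> inv y \<otimes> (y \<otimes> (x' \<otimes> inv y') \<otimes> inv y)"
      using HG [OF xy(1)] JG [OF xy(2)] HG [OF xy(3)] JG [OF xy(4)] by (rule mult_inv_mult_conj)
    also have "\<dots> \<in> N"
      using n JG [OF xy(2)] by (simp add: N.inv_op_closed2)
    finally show "w \<otimes>\<^bsub>G\<lparr>carrier := H\<rparr> \<times>\<times> G\<lparr>carrier := J\<rparr>\<^esub> v \<in> congruent_pairs G N H J"
      using w v xy H J by (simp add: congruent_pairs_def subgroup.m_closed)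
  qed
qed

lemma fst_congruent_pairs:
  assumes N: "N \<lhd> G" and H: "H \<subseteq> carrier G" and J: "subgroup J G" and HJN: "H \<subseteq> J <#> N"
  shows "fst ` congruent_pairs G N H J = H"
proof
  show "H \<subseteq> fst ` congruent_pairs G N H J"
  proof
    fix x assume x: "x \<in> H"
    then obtain y n where y: "y \<in> J" and n: "n \<in> N" and xe: "x = y \<otimes> n"
      using HJN by (auto simp: set_mult_def)
    have "x \<otimes> inv y = y \<otimes> n \<otimes> inv y" using xe by simp
    then have "x \<otimes> inv y \<in> N" using N y n J by (simp add: normal.inv_op_closed2 subgroup.mem_carrier)
    then show "x \<in> fst ` congruent_pairs G N H J" using x y by (force simp: congruent_pairs_def)
  qed
qed (auto simp: congruent_pairs_def)

lemma snd_congruent_pairs: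
  assumes N: "N \<lhd> G" and H: "H \<subseteq> carrier G" and J: "J \<subseteq> H <#> N"
  shows "snd ` congruent_pairs G N H J = J"
proof
  show "J \<subseteq> snd ` congruent_pairs G N H J"
  proof
    fix y assume y: "y \<in> J"
    then obtain x n where x: "x \<in> H" and n: "n \<in> N" and ye: "y = x \<otimes> n"
      using J by (auto simp: set_mult_def)
    have xG: "x \<in> carrier G" using x H by blast
    have nG: "n \<in> carrier G" using n N normal_imp_subgroup subgroup.mem_carrier by metis
    have "x \<otimes> inv y = x \<otimes> inv n \<otimes> inv x"
      using ye xG nG by (simp add: inv_mult_group m_assoc)
    also have "\<dots> \<in> N" using N n xG by (simp add: normal.inv_op_closed2 normal_imp_subgroup subgroup.m_inv_closed)
    finally show "y \<in> snd ` congruent_pairs G N H J" using x y by (force simp: congruent_pairs_def)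
  qed
qed (auto simp: congruent_pairs_def)

lemma subdirect_product_congruent_pairs:
  assumes N: "N \<lhd> G" and H: "subgroup H G" and J: "subgroup J G"
    and HJN: "H \<subseteq> J <#> N" and JHN: "J \<subseteq> H <#> N"
  shows "subdirect_product (G\<lparr>carrier := H\<rparr>) (G\<lparr>carrier := J\<rparr>) (congruent_pairs G N H J)"
  unfolding subdirect_product_def
  using subgroup_congruent_pairs [OF N H J] fst_congruent_pairs [OF N subgroup.subset [OF H] J HJN]
    snd_congruent_pairs [OF N subgroup.subset [OF H] JHN] by simp

lemma inj_on_congruent_pairs:
  assumes H: "subgroup H G" and J: "subgroup J G" and HJ: "H \<inter> J = {\<one>}"
  shows "inj_on (\<lambda>(x, y). x \<otimes> inv y) (congruent_pairs G N H J)"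
proof (rule inj_onI, clarify)
  fix x y x' y' assume "(x, y) \<in> congruent_pairs G N H J" "(x', y') \<in> congruent_pairs G N H J"
    and eq: "x \<otimes> inv y = x' \<otimes> inv y'"
  then have xy: "x \<in> H" "y \<in> J" "x' \<in> H" "y' \<in> J" by (auto simp: congruent_pairs_def)
  then have G: "x \<in> carrier G" "y \<in> carrier G" "x' \<in> carrier G" "y' \<in> carrier G"
    by (simp_all add: subgroup.mem_carrier [OF H] subgroup.mem_carrier [OF J])
  have "inv x' \<otimes> x = inv x' \<otimes> (x \<otimes> inv y) \<otimes> y"
    using G by (simp add: m_assoc)
  also have "\<dots> = inv y' \<otimes> y"
    using G by (simp add: eq m_assoc [symmetric])
  finally have "inv x' \<otimes> x = inv y' \<otimes> y" .
  moreover have "inv x' \<otimes> x \<in> H" "inv y' \<otimes> y \<in> J"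
    using xy H J by (auto intro: subgroup.m_closed subgroup.m_inv_closed)
  ultimately have "inv x' \<otimes> x = \<one>" "inv y' \<otimes> y = \<one>" using HJ by auto
  moreover have "x = x' \<otimes> (inv x' \<otimes> x)" "y = y' \<otimes> (inv y' \<otimes> y)"
    using G by (simp_all add: m_assoc [symmetric])
  ultimately show "x = x' \<and> y = y'" using G by simp
qed

lemma image_congruent_pairs:
  assumes N: "subgroup N G" and H: "subgroup H G" and J: "subgroup J G" and NHJ: "N \<subseteq> H <#> J"
  shows "(\<lambda>(x, y). x \<otimes> inv y) ` congruent_pairs G N H J = N"
proof
  show "N \<subseteq> (\<lambda>(x, y). x \<otimes> inv y) ` congruent_pairs G N H J"
  proof
    fix n assume n: "n \<in> N"
    then obtain x y where x: "x \<in> H" and y: "y \<in> J" and ne: "n = x \<otimes> y"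
      using NHJ by (auto simp: set_mult_def)
    have "n = x \<otimes> inv (inv y)" using ne y J subgroup.mem_carrier by fastforce
    moreover have "(x, inv y) \<in> congruent_pairs G N H J"
      using x y J n \<open>n = x \<otimes> inv (inv y)\<close> by (auto simp: congruent_pairs_def subgroup.m_inv_closed)
    ultimately show "n \<in> (\<lambda>(x, y). x \<otimes> inv y) ` congruent_pairs G N H J" by force
  qed
qed (auto simp: congruent_pairs_def)

lemma inner_aut_in_auto:
  assumes g: "g \<in> carrier G"
  shows "inner_aut G g \<in> auto G"
proof -
  have "inner_aut G g \<in> Bij (carrier G)"
    using conjugation_is_hom g by (auto simp: inner_aut_def hom_def BijGroup_def)
  moreover have "inner_aut G g \<in> hom G G"
    using g by (auto simp: inner_aut_def hom_def m_assoc)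
  ultimately show ?thesis by (simp add: auto_def)
qed

lemma inner_aut_hom: "inner_aut G \<in> hom G (AutoGroup G)"
proof -
  have "inner_aut G = (\<lambda>g. \<lambda>h \<in> carrier G. g \<otimes> h \<otimes> inv g)"
    by (simp add: inner_aut_def fun_eq_iff)
  then show ?thesis
    using conjugation_is_hom inner_aut_in_auto by (auto simp: hom_def AutoGroup_def)
qed

lemma AutoGroup_mult:
  "\<alpha> \<in> carrier (AutoGroup G) \<Longrightarrow> \<beta> \<in> carrier (AutoGroup G) \<Longrightarrow>
    \<alpha> \<otimes>\<^bsub>AutoGroup G\<^esub> \<beta> = compose (carrier G) \<alpha> \<beta>"
  by (simp add: AutoGroup_def BijGroup_def auto_def)

lemma AutoGroup_apply_closed:
  "\<alpha> \<in> carrier (AutoGroup G) \<Longrightarrow> k \<in> carrier G \<Longrightarrow> \<alpha> k \<in> carrier G"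
  by (auto simp: AutoGroup_def auto_def hom_def)

lemma AutoGroup_conj_inner_aut:
  assumes \<alpha>: "\<alpha> \<in> carrier (AutoGroup G)" and k: "k \<in> carrier G"
  shows "\<alpha> \<otimes>\<^bsub>AutoGroup G\<^esub> inner_aut G k \<otimes>\<^bsub>AutoGroup G\<^esub> inv\<^bsub>AutoGroup G\<^esub> \<alpha> = inner_aut G (\<alpha> k)"
proof -
  interpret Aut: group "AutoGroup G" by (rule AutoGroup)
  have hom: "\<alpha> \<in> hom G G" using \<alpha> by (simp add: AutoGroup_def auto_def)
  have \<alpha>k: "\<alpha> k \<in> carrier G" using \<alpha> k by (rule AutoGroup_apply_closed)
  have c: "inner_aut G k \<in> carrier (AutoGroup G)" "inner_aut G (\<alpha> k) \<in> carrier (AutoGroup G)"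
    using inner_aut_in_auto k \<alpha>k by (auto simp: AutoGroup_def)
  interpret \<alpha>: group_hom G G \<alpha> using hom by unfold_locales
  have "\<alpha> \<otimes>\<^bsub>AutoGroup G\<^esub> inner_aut G k = inner_aut G (\<alpha> k) \<otimes>\<^bsub>AutoGroup G\<^esub> \<alpha>"
    using \<alpha> c k by (auto simp: AutoGroup_mult compose_def inner_aut_def intro!: ext)
  then show ?thesis using \<alpha> c by (simp add: Aut.m_assoc)
qed

lemma inner_aut_group_hom: "group_hom G (AutoGroup G) (inner_aut G)"
  unfolding group_hom_def group_hom_axioms_def using is_group AutoGroup inner_aut_hom by simp

lemma Inn_normal: "Inn G \<lhd> AutoGroup G"
proof -
  interpret Aut: group "AutoGroup G" by (rule AutoGroup)
  interpret c: group_hom G "AutoGroup G" "inner_aut G" by (rule inner_aut_group_hom)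
  show ?thesis
    unfolding Aut.normal_inv_iff Inn_def
    using c.img_is_subgroup AutoGroup_conj_inner_aut AutoGroup_apply_closed by auto
qed

lemma kernel_inner_aut: "kernel G (AutoGroup G) (inner_aut G) = group_center G"
proof -
  have "inner_aut G g = \<one>\<^bsub>AutoGroup G\<^esub> \<longleftrightarrow> (\<forall>x \<in> carrier G. g \<otimes> x = x \<otimes> g)"
    if g: "g \<in> carrier G" for g
  proof -
    have "inner_aut G g = \<one>\<^bsub>AutoGroup G\<^esub> \<longleftrightarrow> (\<forall>x \<in> carrier G. x = g \<otimes> x \<otimes> inv g)"
      by (auto simp: AutoGroup_def BijGroup_def inner_aut_def fun_eq_iff)
    also have "\<dots> \<longleftrightarrow> (\<forall>x \<in> carrier G. g \<otimes> x = x \<otimes> g)"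
      using g by (simp add: inv_solve_right)
    finally show ?thesis .
  qed
  then show ?thesis by (auto simp: kernel_def group_center_def)
qed

lemma inj_on_inner_aut:
  assumes "group_center G = {\<one>}"
  shows "inj_on (inner_aut G) (carrier G)"
proof -
  interpret c: group_hom G "AutoGroup G" "inner_aut G" by (rule inner_aut_group_hom)
  show ?thesis using assms by (simp add: c.inj_iff_trivial_ker kernel_inner_aut)
qed

end

lemma skew_left_braceI:
  assumes A: "group A" and M: "group M" and carrier: "carrier M = carrier A"
    and twist: "\<And>a. a \<in> carrier A \<Longrightarrow> \<exists>\<alpha> \<in> hom A A. \<forall>b \<in> carrier A. a \<otimes>\<^bsub>M\<^esub> b = a \<otimes>\<^bsub>A\<^esub> \<alpha> b"
  shows "skew_left_brace A M"
  unfolding skew_left_brace_def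
proof (intro conjI ballI A M carrier [symmetric])
  interpret A: group A by (rule A)
  fix a b c assume abc: "a \<in> carrier A" "b \<in> carrier A" "c \<in> carrier A"
  obtain \<alpha> where \<alpha>: "\<alpha> \<in> hom A A" and a: "\<And>b. b \<in> carrier A \<Longrightarrow> a \<otimes>\<^bsub>M\<^esub> b = a \<otimes>\<^bsub>A\<^esub> \<alpha> b"
    using twist [OF abc(1)] by blast
  have "\<alpha> b \<in> carrier A" "\<alpha> c \<in> carrier A" using \<alpha> abc by (auto simp: hom_def)
  then show "a \<otimes>\<^bsub>M\<^esub> (b \<otimes>\<^bsub>A\<^esub> c) = a \<otimes>\<^bsub>M\<^esub> b \<otimes>\<^bsub>A\<^esub> inv\<^bsub>A\<^esub> a \<otimes>\<^bsub>A\<^esub> (a \<otimes>\<^bsub>M\<^esub> c)"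
    using \<alpha> abc by (simp add: a hom_mult A.m_assoc)
qed

definition inner_quotient :: "('a, 'b) monoid_scheme \<Rightarrow> ('a \<Rightarrow> 'a) \<times> ('a \<Rightarrow> 'a) \<Rightarrow> 'a"
  where "inner_quotient G =
    the_inv_into (carrier G) (inner_aut G) \<circ> (\<lambda>(x, y). x \<otimes>\<^bsub>AutoGroup G\<^esub> inv\<^bsub>AutoGroup G\<^esub> y)"

context group begin

lemma bij_betw_inner_quotient:
  assumes Z: "group_center G = {\<one>}"
    and H: "subgroup H (AutoGroup G)" and J: "subgroup J (AutoGroup G)"
    and HJ: "H \<inter> J = {\<one>\<^bsub>AutoGroup G\<^esub>}" and Inn: "Inn G \<subseteq> H <#>\<^bsub>AutoGroup G\<^esub> J"
  shows "bij_betw (inner_quotient G) (congruent_pairs (AutoGroup G) (Inn G) H J) (carrier G)"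
  unfolding inner_quotient_def
proof (rule bij_betw_trans)
  interpret Aut: group "AutoGroup G" by (rule AutoGroup)
  show "bij_betw (\<lambda>(x, y). x \<otimes>\<^bsub>AutoGroup G\<^esub> inv\<^bsub>AutoGroup G\<^esub> y)
      (congruent_pairs (AutoGroup G) (Inn G) H J) (Inn G)"
    using H J HJ Inn Inn_normal
    by (simp add: bij_betw_def Aut.inj_on_congruent_pairs Aut.image_congruent_pairs normal_imp_subgroup)
  show "bij_betw (the_inv_into (carrier G) (inner_aut G)) (Inn G) (carrier G)"
    unfolding Inn_def using inj_on_inner_aut [OF Z] by (rule bij_betw_the_inv_into [OF inj_on_imp_bij_betw])
qed

lemma inner_quotient_mult:
  assumes Z: "group_center G = {\<one>}" and H: "H \<subseteq> carrier (AutoGroup G)" and J: "J \<subseteq> carrier (AutoGroup G)"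
    and w: "w \<in> congruent_pairs (AutoGroup G) (Inn G) H J" and v: "v \<in> congruent_pairs (AutoGroup G) (Inn G) H J"
  shows "inner_quotient G (w \<otimes>\<^bsub>(AutoGroup G)\<lparr>carrier := H\<rparr> \<times>\<times> (AutoGroup G)\<lparr>carrier := J\<rparr>\<^esub> v)
    = inner_quotient G w \<otimes> snd w (inner_quotient G v)"
proof -
  interpret Aut: group "AutoGroup G" by (rule AutoGroup)
  interpret c: group_hom G "AutoGroup G" "inner_aut G" by (rule inner_aut_group_hom)
  obtain x y x' y' where wv: "w = (x, y)" "v = (x', y')"
    and xy: "x \<in> H" "y \<in> J" "x' \<in> H" "y' \<in> J"
    and Inn: "x \<otimes>\<^bsub>AutoGroup G\<^esub> inv\<^bsub>AutoGroup G\<^esub> y \<in> Inn G" "x' \<otimes>\<^bsub>AutoGroup G\<^esub> inv\<^bsub>AutoGroup G\<^esub> y' \<in> Inn G"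
    using w v by (auto simp: congruent_pairs_def)
  define a where "a = inner_quotient G w"
  define b where "b = inner_quotient G v"
  have inj: "inj_on (inner_aut G) (carrier G)" using Z by (rule inj_on_inner_aut)
  have ab: "a \<in> carrier G" "b \<in> carrier G"
    using Inn by (auto simp: a_def b_def inner_quotient_def wv Inn_def the_inv_into_into [OF inj])
  have ca: "inner_aut G a = x \<otimes>\<^bsub>AutoGroup G\<^esub> inv\<^bsub>AutoGroup G\<^esub> y"
    and cb: "inner_aut G b = x' \<otimes>\<^bsub>AutoGroup G\<^esub> inv\<^bsub>AutoGroup G\<^esub> y'"
    using Inn by (auto simp: a_def b_def inner_quotient_def wv Inn_def f_the_inv_into_f [OF inj])
  have yG: "y \<in> carrier (AutoGroup G)" using xy J by auto
  have "(x \<otimes>\<^bsub>AutoGroup G\<^esub> x') \<otimes>\<^bsub>AutoGroup G\<^esub> inv\<^bsub>AutoGroup G\<^esub> (y \<otimes>\<^bsub>AutoGroup G\<^esub> y')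
      = inner_aut G a \<otimes>\<^bsub>AutoGroup G\<^esub> (y \<otimes>\<^bsub>AutoGroup G\<^esub> inner_aut G b \<otimes>\<^bsub>AutoGroup G\<^esub> inv\<^bsub>AutoGroup G\<^esub> y)"
    using xy H J by (simp add: ca cb Aut.mult_inv_mult_conj subsetD)
  also have "\<dots> = inner_aut G (a \<otimes> y b)"
    using ab yG by (simp add: AutoGroup_conj_inner_aut AutoGroup_apply_closed)
  finally have prod: "(x \<otimes>\<^bsub>AutoGroup G\<^esub> x') \<otimes>\<^bsub>AutoGroup G\<^esub> inv\<^bsub>AutoGroup G\<^esub> (y \<otimes>\<^bsub>AutoGroup G\<^esub> y')
      = inner_aut G (a \<otimes> y b)" .
  have "inner_quotient G (w \<otimes>\<^bsub>(AutoGroup G)\<lparr>carrier := H\<rparr> \<times>\<times> (AutoGroup G)\<lparr>carrier := J\<rparr>\<^esub> v)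
      = the_inv_into (carrier G) (inner_aut G) (inner_aut G (a \<otimes> y b))"
    by (simp add: wv inner_quotient_def prod)
  also have "\<dots> = a \<otimes> y b"
    using ab yG by (intro the_inv_into_f_f [OF inj]) (simp add: AutoGroup_apply_closed)
  finally show ?thesis by (simp add: a_def b_def wv)
qed

lemma image_group_inner_quotient_iso:
  fixes H J :: "('a \<Rightarrow> 'a) set"
  defines "P \<equiv> congruent_pairs (AutoGroup G) (Inn G) H J"
    and "D \<equiv> (AutoGroup G)\<lparr>carrier := H\<rparr> \<times>\<times> (AutoGroup G)\<lparr>carrier := J\<rparr>"
  assumes Z: "group_center G = {\<one>}"
    and H: "subgroup H (AutoGroup G)" and J: "subgroup J (AutoGroup G)"
    and HJ: "H \<inter> J = {\<one>\<^bsub>AutoGroup G\<^esub>}" and Inn: "Inn G \<subseteq> H <#>\<^bsub>AutoGroup G\<^esub> J"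
  shows "image_group (inner_quotient G) (D\<lparr>carrier := P\<rparr>) \<cong> D\<lparr>carrier := P\<rparr>"
proof -
  interpret Aut: group "AutoGroup G" by (rule AutoGroup)
  interpret D: group D
    unfolding D_def using H J by (intro DirProd_group Aut.subgroup_imp_group)
  have P: "subgroup P D"
    unfolding P_def D_def using Inn_normal H J by (rule Aut.subgroup_congruent_pairs)
  have "inner_quotient G \<in> iso (D\<lparr>carrier := P\<rparr>) (image_group (inner_quotient G) (D\<lparr>carrier := P\<rparr>))"
    using bij_betw_inner_quotient [OF Z H J HJ Inn] unfolding P_def
    by (intro inj_imp_image_group_iso) (simp add: bij_betw_def)
  then show ?thesis
    using group.iso_sym [OF D.subgroup_imp_group [OF P]] unfolding is_iso_def by blast
qed

lemma skew_left_brace_inner_quotient: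
  fixes H J :: "('a \<Rightarrow> 'a) set"
  defines "P \<equiv> congruent_pairs (AutoGroup G) (Inn G) H J"
    and "D \<equiv> (AutoGroup G)\<lparr>carrier := H\<rparr> \<times>\<times> (AutoGroup G)\<lparr>carrier := J\<rparr>"
  assumes Z: "group_center G = {\<one>}"
    and H: "subgroup H (AutoGroup G)" and J: "subgroup J (AutoGroup G)"
    and HJ: "H \<inter> J = {\<one>\<^bsub>AutoGroup G\<^esub>}" and Inn: "Inn G \<subseteq> H <#>\<^bsub>AutoGroup G\<^esub> J"
  shows "skew_left_brace (monoid.truncate G) (image_group (inner_quotient G) (D\<lparr>carrier := P\<rparr>))"
proof -
  interpret Aut: group "AutoGroup G" by (rule AutoGroup)
  interpret D: group D
    unfolding D_def using H J by (intro DirProd_group Aut.subgroup_imp_group)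
  have HG: "H \<subseteq> carrier (AutoGroup G)" and JG: "J \<subseteq> carrier (AutoGroup G)"
    using H J by (simp_all add: subgroup.subset)
  have P: "subgroup P D"
    unfolding P_def D_def using Inn_normal H J by (rule Aut.subgroup_congruent_pairs)
  have bij: "bij_betw (inner_quotient G) P (carrier G)"
    unfolding P_def using Z H J HJ Inn by (rule bij_betw_inner_quotient)
  have iso: "inner_quotient G \<in> iso (D\<lparr>carrier := P\<rparr>) (image_group (inner_quotient G) (D\<lparr>carrier := P\<rparr>))"
    using bij by (simp add: inj_imp_image_group_iso bij_betw_def)
  show ?thesis
  proof (rule skew_left_braceI)
    show "group (monoid.truncate G)" by (rule group_truncate)
    show "group (image_group (inner_quotient G) (D\<lparr>carrier := P\<rparr>))"
      using bij D.subgroup_imp_group [OF P] by (simp add: group.inj_imp_image_group_is_group bij_betw_def)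
    show "carrier (image_group (inner_quotient G) (D\<lparr>carrier := P\<rparr>)) = carrier (monoid.truncate G)"
      using bij by (simp add: image_group_carrier bij_betw_def monoid.defs)
  next
    fix a assume "a \<in> carrier (monoid.truncate G)"
    then have "a \<in> inner_quotient G ` P" using bij by (simp add: monoid.defs bij_betw_def)
    then obtain w where w: "w \<in> P" and a: "a = inner_quotient G w" by blast
    have "snd w \<in> J" using w by (auto simp: P_def congruent_pairs_def)
    then have hom: "snd w \<in> hom (monoid.truncate G) (monoid.truncate G)"
      using JG by (auto simp: AutoGroup_def auto_def hom_def monoid.defs)
    have "a \<otimes>\<^bsub>image_group (inner_quotient G) (D\<lparr>carrier := P\<rparr>)\<^esub> b = a \<otimes>\<^bsub>monoid.truncate G\<^esub> snd w b"
      if "b \<in> carrier (monoid.truncate G)" for b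
    proof -
      have "b \<in> inner_quotient G ` P" using bij that by (simp add: monoid.defs bij_betw_def)
      then obtain v where v: "v \<in> P" and b: "b = inner_quotient G v" by blast
      have "a \<otimes>\<^bsub>image_group (inner_quotient G) (D\<lparr>carrier := P\<rparr>)\<^esub> b = inner_quotient G (w \<otimes>\<^bsub>D\<^esub> v)"
        using iso w v by (simp add: a b iso_def hom_def)
      also have "\<dots> = a \<otimes>\<^bsub>monoid.truncate G\<^esub> snd w b"
        using Z HG JG w v unfolding a b P_def D_def by (simp add: inner_quotient_mult monoid.defs)
      finally show ?thesis .
    qed
    then show "\<exists>\<alpha> \<in> hom (monoid.truncate G) (monoid.truncate G). \<forall>b \<in> carrier (monoid.truncate G).
        a \<otimes>\<^bsub>image_group (inner_quotient G) (D\<lparr>carrier := P\<rparr>)\<^esub> b = a \<otimes>\<^bsub>monoid.truncate G\<^esub> \<alpha> b"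
      using hom by blast
  qed
qed

end

theorem mainTheorem2:
  fixes K :: "('a, 'b) monoid_scheme"
    and Xs Ys :: "('a \<Rightarrow> 'a) set"
  assumes "group K"
    and "finite (carrier K)"
    and "group_center K = {\<one>\<^bsub>K\<^esub>}"
    and "subgroup Xs (AutoGroup K)"
    and "subgroup Ys (AutoGroup K)"
    and "Xs \<inter> Ys = {\<one>\<^bsub>AutoGroup K\<^esub>}"
    and "Xs <#>\<^bsub>AutoGroup K\<^esub> Ys = Xs <#>\<^bsub>AutoGroup K\<^esub> Inn K"
    and "Xs <#>\<^bsub>AutoGroup K\<^esub> Ys = Ys <#>\<^bsub>AutoGroup K\<^esub> Inn K"
  shows "\<exists>(A :: 'a monoid) (M :: 'a monoid) Ws.
           skew_left_brace A M \<and> A \<cong> K \<and>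
           subdirect_product ((AutoGroup K)\<lparr>carrier := Xs\<rparr>) ((AutoGroup K)\<lparr>carrier := Ys\<rparr>) Ws \<and>
           M \<cong> (DirProd ((AutoGroup K)\<lparr>carrier := Xs\<rparr>) ((AutoGroup K)\<lparr>carrier := Ys\<rparr>))\<lparr>carrier := Ws\<rparr>"
proof -
  interpret K: group K by fact
  interpret Aut: group "AutoGroup K" by (rule K.AutoGroup)
  note Z = assms(3) and X = assms(4) and Y = assms(5) and XY = assms(6)
  have XG: "Xs \<subseteq> carrier (AutoGroup K)" and YG: "Ys \<subseteq> carrier (AutoGroup K)"
    and InnG: "Inn K \<subseteq> carrier (AutoGroup K)"
    using X Y K.Inn_normal by (simp_all add: subgroup.subset normal_imp_subgroup)
  have X_sub: "Xs \<subseteq> Ys <#>\<^bsub>AutoGroup K\<^esub> Inn K"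
    using Aut.subset_set_mult_left [OF Y XG] assms(8) by simp
  have Y_sub: "Ys \<subseteq> Xs <#>\<^bsub>AutoGroup K\<^esub> Inn K"
    using Aut.subset_set_mult_right [OF X YG] assms(7) by simp
  have Inn_sub: "Inn K \<subseteq> Xs <#>\<^bsub>AutoGroup K\<^esub> Ys"
    using Aut.subset_set_mult_right [OF X InnG] assms(7) by simp
  show ?thesis
    using K.skew_left_brace_inner_quotient [OF Z X Y XY Inn_sub] K.iso_sym [OF K.iso_truncate]
      Aut.subdirect_product_congruent_pairs [OF K.Inn_normal X Y X_sub Y_sub]
      K.image_group_inner_quotient_iso [OF Z X Y XY Inn_sub]
    by blast
qed

end
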